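(* Suppose that for some $T>0$ there is a function $I_T:\mathbb R^d\times\mathbb R^d\to[0,\infty]$, lower semicontinuous, with $I_T(0,0)>0$, such that for every $q\in\mathbb R^d$ and compact $V\subset\mathbb R^d$, \[\lim_{\delta\to0}\limsup_{\varepsilon\to0}\varepsilon\log\sup_{z\in E:|\varepsilon z-q|<\delta}\mathbb P_z(Z^\varepsilon(T)\in V)\le-\inf_{q'\in V}I_T(q,q').\] Then for any $A>0$, any $q\in\mathbb R^d$ and any bounded set $V\subset\mathbb R^d$ there is $K>0$ such that \[\lim_{\delta\to0}\limsup_{n\to\infty}\sup_{z\in E:|z-nq|<\delta n}\frac1n\log\int_{Kn}^\infty\mathbb P_z\bigl(Z(t)\in nV\bigr)\,dt\ \le\ -A.\]
   Context: Let $E\subset\mathbb R^d$ be unbounded and $(Z(t))_{t\ge0}$ a continuous-time strong Markov process on $E$ with right-continuous paths having left limits; $\mathbb P_z$ denotes probability given $Z(0)=z$; $Z^\varepsilon(t)=\varepsilon Z(t/\varepsilon)$. For $B\subset\mathbb R^d$ and $n>0$, $nB=\{nx:x\in B\}$. *)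

theory Defs
  imports "HOL-Probability.Probability"
begin

definition eln :: "ereal \<Rightarrow> ereal" where
  "eln x = (if x \<le> 0 then -\<infinity> else if x = \<infinity> then \<infinity> else ereal (ln (real_of_ereal x)))"

definition lsc :: "('b::topological_space \<Rightarrow> ereal) \<Rightarrow> bool" where
  "lsc f \<longleftrightarrow> (\<forall>c. open {x. c < f x})"

definition nat_filt :: "'w measure \<Rightarrow> (real \<Rightarrow> 'w \<Rightarrow> 'a::topological_space) \<Rightarrow> real \<Rightarrow> 'w set set" where
  "nat_filt S Z t = sigma_sets (space S)
     {Z s -` B \<inter> space S | s B. 0 \<le> s \<and> s \<le> t \<and> B \<in> sets borel}"

definition nat_filt_inf :: "'w measure \<Rightarrow> (real \<Rightarrow> 'w \<Rightarrow> 'a::topological_space) \<Rightarrow> 'w set set" where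
  "nat_filt_inf S Z = sigma_sets (space S)
     {Z s -` B \<inter> space S | s B. 0 \<le> s \<and> B \<in> sets borel}"

definition is_stopping_time :: "'w measure \<Rightarrow> (real \<Rightarrow> 'w \<Rightarrow> 'a::topological_space) \<Rightarrow> ('w \<Rightarrow> real) \<Rightarrow> bool" where
  "is_stopping_time S Z \<tau> \<longleftrightarrow> (\<forall>\<omega>\<in>space S. 0 \<le> \<tau> \<omega>) \<and>
     (\<forall>t\<ge>0. {\<omega>\<in>space S. \<tau> \<omega> \<le> t} \<in> nat_filt S Z t)"

definition stopped_sets :: "'w measure \<Rightarrow> (real \<Rightarrow> 'w \<Rightarrow> 'a::topological_space) \<Rightarrow> ('w \<Rightarrow> real) \<Rightarrow> 'w set set" where
  "stopped_sets S Z \<tau> = {A \<in> nat_filt_inf S Z.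
     \<forall>t\<ge>0. A \<inter> {\<omega>\<in>space S. \<tau> \<omega> \<le> t} \<in> nat_filt S Z t}"

text \<open>A strong Markov process on the state space E with cadlag paths:
  sample space S, law P z of the process started at z (for z in E),
  process Z t \<omega>.\<close>
definition strong_markov_cadlag ::
  "'w measure \<Rightarrow> ('a::euclidean_space \<Rightarrow> 'w measure) \<Rightarrow> (real \<Rightarrow> 'w \<Rightarrow> 'a) \<Rightarrow> 'a set \<Rightarrow> bool" where
  "strong_markov_cadlag S P Z E \<longleftrightarrow>
     (\<forall>z\<in>E. prob_space (P z) \<and> sets (P z) = sets S) \<and>
     (\<forall>t\<ge>0. Z t \<in> borel_measurable S) \<and>
     (\<forall>z\<in>E. AE \<omega> in P z. Z 0 \<omega> = z) \<and>
     (\<forall>\<omega>\<in>space S. \<forall>t\<ge>0. Z t \<omega> \<in> E) \<and>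
     (\<forall>\<omega>\<in>space S. \<forall>t\<ge>0. continuous (at_right t) (\<lambda>s. Z s \<omega>)) \<and>
     (\<forall>\<omega>\<in>space S. \<forall>t>0. \<exists>l. ((\<lambda>s. Z s \<omega>) \<longlongrightarrow> l) (at_left t)) \<and>
     (\<forall>s\<ge>0. \<forall>B\<in>sets borel.
        (\<lambda>z. measure (P z) {\<omega>\<in>space S. Z s \<omega> \<in> B}) \<in> borel_measurable (restrict_space borel E)) \<and>
     (\<forall>z\<in>E. \<forall>\<tau>. is_stopping_time S Z \<tau> \<longrightarrow>
        (\<forall>A\<in>stopped_sets S Z \<tau>. \<forall>s\<ge>0. \<forall>B\<in>sets borel.
          measure (P z) (A \<inter> {\<omega>\<in>space S. Z (\<tau> \<omega> + s) \<omega> \<in> B}) =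
          (\<integral>\<omega>. indicator A \<omega> * measure (P (Z (\<tau> \<omega>) \<omega>)) {\<omega>'\<in>space S. Z s \<omega>' \<in> B} \<partial>P z)))"

end

theory Submission imports Defs begin

text \<open>Lower semicontinuity gives \<open>r, c > 0\<close> with \<open>I (0, q') > c\<close> for \<open>|q'| \<le> r\<close>, so the
  large deviation upper bound at \<open>q = 0\<close> yields
  \<open>P\<^sub>z (\<epsilon> Z (T/\<epsilon>) \<in> cball 0 r) \<le> exp (-c/\<epsilon>)\<close> uniformly for small \<open>\<epsilon>\<close> and \<open>|\<epsilon> z| < \<delta>\<^sub>0\<close>.
  At a time \<open>t \<ge> K n\<close> take \<open>\<epsilon> = T/t\<close>: for large \<open>K\<close> a starting point at distance \<open>O(n)\<close>
  from the origin and the set \<open>n V\<close> are both shrunk into these windows, hence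
  \<open>P\<^sub>z (Z t \<in> n V) \<le> exp (-c t / T)\<close>. Integrating over \<open>[K n, \<infinity>)\<close> gives the exponent
  \<open>-c K / T\<close>, which is below \<open>-A\<close> once \<open>K\<close> is large.\<close>

lemma eln_mono: "x \<le> y \<Longrightarrow> eln x \<le> eln y"
  unfolding eln_def by (cases x; cases y) auto

lemma eln_ereal: "0 < x \<Longrightarrow> eln (ereal x) = ereal (ln x)"
  unfolding eln_def by auto

lemma le_exp_of_mult_eln_less:
  assumes "ereal \<epsilon> * eln (ereal x) < - ereal c" and "0 < \<epsilon>"
  shows "x \<le> exp (- c / \<epsilon>)"
proof (cases "x > 0")
  case True
  then have "\<epsilon> * ln x < - c" using assms(1) by (simp add: eln_ereal)
  then have "ln x < - c / \<epsilon>" using assms(2) by (simp add: field_simps)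
  then show ?thesis using True by (metis exp_less_mono exp_ln less_imp_le)
qed (auto intro: order_trans[OF _ less_imp_le[OF exp_gt_zero]])

lemma lsc_compose_continuous:
  assumes "lsc f" and "continuous_on UNIV g"
  shows "lsc (\<lambda>x. f (g x))"
proof -
  have "open (g -` {y. c < f y})" for c
    using assms by (intro open_vimage) (auto simp: lsc_def)
  then show ?thesis by (simp add: lsc_def vimage_def)
qed

lemma lsc_greater_on_cball:
  assumes "lsc f" and "c < f x"
  obtains r where "r > 0" and "\<And>y. y \<in> cball x r \<Longrightarrow> c < f y"
proof -
  have "open {y. c < f y}" using assms(1) by (simp add: lsc_def)
  then obtain r where "r > 0" "cball x r \<subseteq> {y. c < f y}"
    using assms(2) by (force simp: open_contains_cball)
  then show ?thesis using that by blast
qed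

lemma Lim_at_right_0_eq_Inf:
  fixes G :: "real \<Rightarrow> 'b::{complete_linorder, linorder_topology}"
  assumes mono: "\<And>a b. 0 < a \<Longrightarrow> a \<le> b \<Longrightarrow> G a \<le> G b"
  shows "Lim (at_right 0) G = Inf (G ` {0<..})"
proof -
  have "(G \<longlongrightarrow> Inf (G ` {0<..})) (at_right 0)"
  proof (rule order_tendstoI)
    fix a assume "Inf (G ` {0<..}) < a"
    then obtain d where "d > 0" "G d < a" by (auto simp: Inf_less_iff)
    then show "\<forall>\<^sub>F x in at_right 0. G x < a"
      unfolding eventually_at_right_field
      by (intro exI[of _ d]) (metis le_less_trans less_imp_le mono)
  next
    fix a assume "a < Inf (G ` {0<..})"
    then show "\<forall>\<^sub>F x in at_right 0. a < G x"
      unfolding eventually_at_right_field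
      by (intro exI[of _ 1]) (auto intro: less_le_trans INF_lower)
  qed
  then show ?thesis by (intro tendsto_Lim) auto
qed

lemma Lim_at_right_0_le:
  fixes G :: "real \<Rightarrow> 'b::{complete_linorder, linorder_topology}"
  assumes "\<And>a b. 0 < a \<Longrightarrow> a \<le> b \<Longrightarrow> G a \<le> G b" and "0 < d"
  shows "Lim (at_right 0) G \<le> G d"
  using assms by (simp add: Lim_at_right_0_eq_Inf INF_lower)

lemma Lim_at_right_0_lessE:
  fixes G :: "real \<Rightarrow> 'b::{complete_linorder, linorder_topology}"
  assumes "\<And>a b. 0 < a \<Longrightarrow> a \<le> b \<Longrightarrow> G a \<le> G b" and "Lim (at_right 0) G < y"
  obtains d where "0 < d" and "G d < y"
  using assms by (auto simp: Lim_at_right_0_eq_Inf Inf_less_iff)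

lemma exp_bound_of_Lim_Limsup_less:
  fixes p :: "real \<Rightarrow> 'z \<Rightarrow> real" and D :: "real \<Rightarrow> real \<Rightarrow> 'z set"
  assumes less: "Lim (at_right 0) (\<lambda>\<delta>. Limsup (at_right 0) (\<lambda>\<epsilon>.
                 ereal \<epsilon> * eln (SUP z\<in>D \<epsilon> \<delta>. ereal (p \<epsilon> z)))) < - ereal c"
    and D_mono: "\<And>\<epsilon> a b. a \<le> b \<Longrightarrow> D \<epsilon> a \<subseteq> D \<epsilon> b"
  obtains \<delta>\<^sub>0 \<epsilon>\<^sub>0 where "0 < \<delta>\<^sub>0" and "0 < \<epsilon>\<^sub>0"
    and "\<And>\<epsilon> z. 0 < \<epsilon> \<Longrightarrow> \<epsilon> < \<epsilon>\<^sub>0 \<Longrightarrow> z \<in> D \<epsilon> \<delta>\<^sub>0 \<Longrightarrow> p \<epsilon> z \<le> exp (- c / \<epsilon>)"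
proof -
  define F where "F \<delta> \<epsilon> = ereal \<epsilon> * eln (SUP z\<in>D \<epsilon> \<delta>. ereal (p \<epsilon> z))" for \<delta> \<epsilon>
  have F_mono: "F a \<epsilon> \<le> F b \<epsilon>" if "a \<le> b" "0 \<le> \<epsilon>" for a b \<epsilon>
    unfolding F_def using that D_mono
    by (intro ereal_mult_left_mono eln_mono SUP_subset_mono) auto
  have "Limsup (at_right 0) (F a) \<le> Limsup (at_right 0) (F b)" if "a \<le> b" for a b
    using that F_mono by (intro Limsup_mono) (auto simp: eventually_at_right_field intro: exI[of _ 1])
  then obtain \<delta>\<^sub>0 where "0 < \<delta>\<^sub>0" and "Limsup (at_right 0) (F \<delta>\<^sub>0) < - ereal c"
    using less Lim_at_right_0_lessE[of "\<lambda>\<delta>. Limsup (at_right 0) (F \<delta>)"] unfolding F_def by blast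
  then obtain \<epsilon>\<^sub>0 where "0 < \<epsilon>\<^sub>0" and F_less: "\<And>\<epsilon>. 0 < \<epsilon> \<Longrightarrow> \<epsilon> < \<epsilon>\<^sub>0 \<Longrightarrow> F \<delta>\<^sub>0 \<epsilon> < - ereal c"
    by (auto dest!: Limsup_lessD simp: eventually_at_right_field)
  have "p \<epsilon> z \<le> exp (- c / \<epsilon>)" if "0 < \<epsilon>" "\<epsilon> < \<epsilon>\<^sub>0" "z \<in> D \<epsilon> \<delta>\<^sub>0" for \<epsilon> z
  proof (rule le_exp_of_mult_eln_less[OF _ \<open>0 < \<epsilon>\<close>])
    have "ereal \<epsilon> * eln (ereal (p \<epsilon> z)) \<le> F \<delta>\<^sub>0 \<epsilon>"
      unfolding F_def using that by (intro ereal_mult_left_mono eln_mono SUP_upper) auto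
    also have "F \<delta>\<^sub>0 \<epsilon> < - ereal c" using F_less that by blast
    finally show "ereal \<epsilon> * eln (ereal (p \<epsilon> z)) < - ereal c" .
  qed
  then show ?thesis using that \<open>0 < \<delta>\<^sub>0\<close> \<open>0 < \<epsilon>\<^sub>0\<close> by blast
qed

lemma nn_integral_atLeast_le_exp:
  fixes g :: "real \<Rightarrow> real"
  assumes "0 < b" and "\<And>t. a \<le> t \<Longrightarrow> g t \<le> exp (- b * t)"
  shows "(\<integral>\<^sup>+ t. indicator {a..} t * ennreal (g t) \<partial>lborel) \<le> ennreal (exp (- b * a) / b)"
proof -
  have "(\<integral>\<^sup>+ t. indicator {a..} t * ennreal (g t) \<partial>lborel)
      \<le> (\<integral>\<^sup>+ t. indicator {a..} t * ennreal (exp (- b * t)) \<partial>lborel)"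
    using assms(2) by (intro nn_integral_mono) (auto intro: ennreal_leI split: split_indicator)
  also have "\<dots> = ennreal (exp (- b * a) / b)"
    unfolding indicator_mult_ennreal
    by (rule nn_integral_has_integral_lebesgue[OF _ has_integral_exp_minus_to_infinity[OF assms(1)]]) simp
  finally show ?thesis .
qed

lemma mult_eln_enn2ereal_le:
  assumes "x \<le> ennreal M" and "0 < M" and "0 < n"
  shows "ereal (1 / n) * eln (enn2ereal x) \<le> ereal (ln M / n)"
proof -
  have "enn2ereal x \<le> ereal M"
    using assms(1,2) by (metis enn2ereal_ennreal less_eq_ennreal.rep_eq less_imp_le)
  then have "ereal (1 / n) * eln (enn2ereal x) \<le> ereal (1 / n) * eln (ereal M)"
    using assms(3) by (intro ereal_mult_left_mono eln_mono) auto
  also have "\<dots> = ereal (ln M / n)" using assms(2) by (simp add: eln_ereal)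
  finally show ?thesis .
qed

context
  fixes S :: "'w measure" and P :: "'a::euclidean_space \<Rightarrow> 'w measure"
    and Z :: "real \<Rightarrow> 'w \<Rightarrow> 'a" and E :: "'a set"
    and T c r \<delta>\<^sub>0 \<epsilon>\<^sub>0 :: real
  assumes proc: "strong_markov_cadlag S P Z E"
    and T_pos: "0 < T" and c_pos: "0 < c" and r_pos: "0 < r"
    and \<delta>\<^sub>0_pos: "0 < \<delta>\<^sub>0" and \<epsilon>\<^sub>0_pos: "0 < \<epsilon>\<^sub>0"
    and decay: "\<And>\<epsilon> z. 0 < \<epsilon> \<Longrightarrow> \<epsilon> < \<epsilon>\<^sub>0 \<Longrightarrow> z \<in> E \<Longrightarrow> norm (\<epsilon> *\<^sub>R z) < \<delta>\<^sub>0 \<Longrightarrow>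
       measure (P z) {\<omega>\<in>space S. \<epsilon> *\<^sub>R Z (T / \<epsilon>) \<omega> \<in> cball 0 r} \<le> exp (- c / \<epsilon>)"
begin

lemma measure_hit_le_exp:
  assumes z: "z \<in> E" and "0 < t" and "T / t < \<epsilon>\<^sub>0" and "T / t * norm z < \<delta>\<^sub>0"
    and W: "\<And>x. x \<in> W \<Longrightarrow> T / t * norm x \<le> r"
  shows "measure (P z) {\<omega>\<in>space S. Z t \<omega> \<in> W} \<le> exp (- (c / T) * t)"
proof -
  define \<epsilon> where "\<epsilon> = T / t"
  have "0 < \<epsilon>" and t_eq: "T / \<epsilon> = t" using T_pos \<open>0 < t\<close> by (auto simp: \<epsilon>_def)
  interpret prob_space "P z" using proc z by (simp add: strong_markov_cadlag_def)
  have "Z t \<in> borel_measurable S" using proc \<open>0 < t\<close> by (simp add: strong_markov_cadlag_def)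
  then have "{\<omega>\<in>space S. \<epsilon> *\<^sub>R Z t \<omega> \<in> cball 0 r} \<in> sets (P z)"
    using proc z by (simp add: strong_markov_cadlag_def) measurable
  with W T_pos \<open>0 < t\<close> have "measure (P z) {\<omega>\<in>space S. Z t \<omega> \<in> W}
      \<le> measure (P z) {\<omega>\<in>space S. \<epsilon> *\<^sub>R Z (T / \<epsilon>) \<omega> \<in> cball 0 r}"
    unfolding t_eq by (intro finite_measure_mono) (auto simp: \<epsilon>_def)
  also have "\<dots> \<le> exp (- c / \<epsilon>)"
    using assms \<open>0 < \<epsilon>\<close> T_pos by (intro decay) (auto simp: \<epsilon>_def)
  also have "- c / \<epsilon> = - (c / T) * t" using T_pos \<open>0 < t\<close> by (simp add: \<epsilon>_def)
  finally show ?thesis .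
qed

lemma measure_scaled_hit_le_exp:
  assumes K: "T * (norm q + 1) < K * \<delta>\<^sub>0" "\<And>v. v \<in> V \<Longrightarrow> T * norm v \<le> K * r"
    and n: "0 < n" "T < K * n * \<epsilon>\<^sub>0"
    and z: "z \<in> E" "norm (z - n *\<^sub>R q) < n"
    and t: "K * n \<le> t"
  shows "measure (P z) {\<omega>\<in>space S. Z t \<omega> \<in> (\<lambda>x. n *\<^sub>R x) ` V} \<le> exp (- (c / T) * t)"
proof (rule measure_hit_le_exp[OF z(1)])
  have "0 < K * n * \<epsilon>\<^sub>0" using n(2) T_pos by linarith
  then have "0 < K * n" "0 < K" using \<epsilon>\<^sub>0_pos \<open>0 < n\<close> by (auto simp: zero_less_mult_iff)
  then show "0 < t" using t by linarith
  have T_t: "T / t \<le> T / (K * n)" using t \<open>0 < K * n\<close> T_pos by (auto intro: frac_le)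
  have "T / (K * n) < \<epsilon>\<^sub>0"
    using n(2) \<open>0 < K * n\<close> by (simp add: pos_divide_less_eq ac_simps)
  then show "T / t < \<epsilon>\<^sub>0" using T_t by linarith
  have "norm z \<le> n * (norm q + 1)"
    using norm_triangle_ineq[of "z - n *\<^sub>R q" "n *\<^sub>R q"] z(2) \<open>0 < n\<close>
    by (simp add: algebra_simps)
  then have "T / t * norm z \<le> T / (K * n) * (n * (norm q + 1))"
    using T_t T_pos \<open>0 < t\<close> \<open>0 < K * n\<close> by (intro mult_mono) auto
  also have "\<dots> = T * (norm q + 1) / K" using \<open>0 < n\<close> by simp
  also have "\<dots> < \<delta>\<^sub>0" using K(1) \<open>0 < K\<close> by (simp add: pos_divide_less_eq ac_simps)
  finally show "T / t * norm z < \<delta>\<^sub>0" .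
  fix x assume "x \<in> (\<lambda>x. n *\<^sub>R x) ` V"
  then obtain v where "v \<in> V" "x = n *\<^sub>R v" by blast
  have "T / t * norm x \<le> T / (K * n) * (n * norm v)"
    using T_t T_pos \<open>0 < t\<close> \<open>0 < K * n\<close> \<open>0 < n\<close> \<open>x = n *\<^sub>R v\<close>
    by (intro mult_mono) auto
  also have "\<dots> = T * norm v / K" using \<open>0 < n\<close> by simp
  also have "\<dots> \<le> r" using K(2)[OF \<open>v \<in> V\<close>] \<open>0 < K\<close> by (simp add: pos_divide_le_eq ac_simps)
  finally show "T / t * norm x \<le> r" .
qed

lemma occupation_log_le:
  assumes K: "T * (norm q + 1) < K * \<delta>\<^sub>0" "\<And>v. v \<in> V \<Longrightarrow> T * norm v \<le> K * r"
      "A + 1 \<le> c / T * K"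
    and n: "0 < n" "T < K * n * \<epsilon>\<^sub>0" "\<bar>ln (c / T)\<bar> \<le> n"
    and z: "z \<in> E" "norm (z - n *\<^sub>R q) < n"
  shows "ereal (1 / n) * eln (enn2ereal (\<integral>\<^sup>+ t. indicator {K * n..} t *
           ennreal (measure (P z) {\<omega>\<in>space S. Z t \<omega> \<in> (\<lambda>x. n *\<^sub>R x) ` V}) \<partial>lborel))
         \<le> - ereal A"
proof -
  define M where "M = exp (- (c / T) * (K * n)) / (c / T)"
  have "0 < c / T" using c_pos T_pos by simp
  have "ereal (1 / n) * eln (enn2ereal (\<integral>\<^sup>+ t. indicator {K * n..} t *
           ennreal (measure (P z) {\<omega>\<in>space S. Z t \<omega> \<in> (\<lambda>x. n *\<^sub>R x) ` V}) \<partial>lborel))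
      \<le> ereal (ln M / n)"
    unfolding M_def using \<open>0 < c / T\<close> n(1) c_pos T_pos
    by (intro mult_eln_enn2ereal_le nn_integral_atLeast_le_exp measure_scaled_hit_le_exp[OF K(1,2) n(1,2) z])
      auto
  also have "ln M / n = - (c / T * K) - ln (c / T) / n"
  proof -
    have "ln M = - (c / T) * (K * n) - ln (c / T)"
      unfolding M_def using \<open>0 < c / T\<close> by (subst ln_div) auto
    then show ?thesis using n(1) by (simp add: field_simps)
  qed
  also have "\<dots> \<le> - A"
  proof -
    have "- ln (c / T) / n \<le> 1" using n(1,3) by (simp add: le_divide_eq abs_le_iff)
    then show ?thesis using K(3) by linarith
  qed
  finally show ?thesis by simp
qed

lemma occupation_Lim_Limsup_le:
  assumes "bounded V"
  shows "\<exists>K>0. Lim (at_right (0::real)) (\<lambda>\<delta>.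
       Limsup at_top (\<lambda>n::real.
         SUP z\<in>{z\<in>E. norm (z - n *\<^sub>R q) < \<delta> * n}.
           ereal (1 / n) * eln (enn2ereal
             (\<integral>\<^sup>+ t. indicator {K * n..} t *
                 ennreal (measure (P z) {\<omega>\<in>space S. Z t \<omega> \<in> (\<lambda>x. n *\<^sub>R x) ` V}) \<partial>lborel))))
     \<le> - ereal A"
proof -
  obtain R where "0 < R" and R: "\<And>v. v \<in> V \<Longrightarrow> norm v \<le> R"
    using assms unfolding bounded_pos by blast
  define K where "K = max (max (T * (norm q + 1) / \<delta>\<^sub>0 + 1) (T * R / r)) (T * (A + 1) / c)"
  have K_ge: "T * (norm q + 1) / \<delta>\<^sub>0 < K" "T * R / r \<le> K" "T * (A + 1) / c \<le> K"
    by (auto simp: K_def)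
  have "0 \<le> T * (norm q + 1) / \<delta>\<^sub>0" using T_pos \<delta>\<^sub>0_pos by simp
  then have "0 < K" using K_ge(1) by linarith
  have K_q: "T * (norm q + 1) < K * \<delta>\<^sub>0" using K_ge(1) \<delta>\<^sub>0_pos by (simp add: divide_less_eq)
  have K_V: "T * norm v \<le> K * r" if "v \<in> V" for v
  proof -
    have "T * norm v \<le> T * R" using R[OF that] T_pos by simp
    also have "\<dots> \<le> K * r" using K_ge(2) r_pos by (simp add: pos_divide_le_eq)
    finally show ?thesis .
  qed
  have K_A: "A + 1 \<le> c / T * K"
    using K_ge(3) c_pos T_pos by (simp add: field_simps)
  define H where "H \<delta> = Limsup at_top (\<lambda>n::real.
         SUP z\<in>{z\<in>E. norm (z - n *\<^sub>R q) < \<delta> * n}.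
           ereal (1 / n) * eln (enn2ereal
             (\<integral>\<^sup>+ t. indicator {K * n..} t *
                 ennreal (measure (P z) {\<omega>\<in>space S. Z t \<omega> \<in> (\<lambda>x. n *\<^sub>R x) ` V}) \<partial>lborel)))"
    for \<delta>
  have "H a \<le> H b" if "a \<le> b" for a b
    unfolding H_def using that
    by (intro Limsup_mono eventually_mono[OF eventually_gt_at_top[of 0]] SUP_subset_mono)
      (auto intro: less_le_trans mult_right_mono)
  then have "Lim (at_right 0) H \<le> H 1" by (intro Lim_at_right_0_le) auto
  also have "H 1 \<le> - ereal A"
    unfolding H_def
  proof (intro Limsup_bounded eventually_mono[OF eventually_ge_at_top] SUP_least)
    fix n z
    assume n: "max (T / (K * \<epsilon>\<^sub>0) + 1) \<bar>ln (c / T)\<bar> \<le> n"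
      and z: "z \<in> {z \<in> E. norm (z - n *\<^sub>R q) < 1 * n}"
    have "T / (K * \<epsilon>\<^sub>0) < n" using n by linarith
    moreover have "0 < T / (K * \<epsilon>\<^sub>0)" using T_pos \<open>0 < K\<close> \<epsilon>\<^sub>0_pos by simp
    ultimately have "0 < n" by linarith
    have "T < K * n * \<epsilon>\<^sub>0"
      using \<open>T / (K * \<epsilon>\<^sub>0) < n\<close> \<open>0 < K\<close> \<epsilon>\<^sub>0_pos by (simp add: divide_less_eq ac_simps)
    moreover have "\<bar>ln (c / T)\<bar> \<le> n" using n by linarith
    ultimately show "ereal (1 / n) * eln (enn2ereal (\<integral>\<^sup>+ t. indicator {K * n..} t *
           ennreal (measure (P z) {\<omega>\<in>space S. Z t \<omega> \<in> (\<lambda>x. n *\<^sub>R x) ` V}) \<partial>lborel))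
         \<le> - ereal A"
      using \<open>0 < n\<close> z by (intro occupation_log_le[OF K_q K_V K_A]) auto
  qed
  finally show ?thesis using \<open>0 < K\<close> unfolding H_def by blast
qed

end

theorem lemma3p3:
  fixes S :: "'w measure" and P :: "'a::euclidean_space \<Rightarrow> 'w measure"
    and Z :: "real \<Rightarrow> 'w \<Rightarrow> 'a" and E :: "'a set"
    and T :: real and I :: "'a \<times> 'a \<Rightarrow> ereal"
  assumes proc: "strong_markov_cadlag S P Z E"
    and unbdd: "\<not> bounded E"
    and T_pos: "T > 0"
    and I_nonneg: "\<forall>x. I x \<ge> 0"
    and I_lsc: "lsc I"
    and I_00: "I (0, 0) > 0"
    and ldp: "\<And>q V. compact V \<Longrightarrow>
      Lim (at_right (0::real)) (\<lambda>\<delta>.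
        Limsup (at_right (0::real)) (\<lambda>\<epsilon>.
          ereal \<epsilon> * eln (SUP z\<in>{z\<in>E. norm (\<epsilon> *\<^sub>R z - q) < \<delta>}.
            ereal (measure (P z) {\<omega>\<in>space S. \<epsilon> *\<^sub>R Z (T / \<epsilon>) \<omega> \<in> V}))))
      \<le> - (INF q'\<in>V. I (q, q'))"
  shows "\<And>A q V. A > 0 \<Longrightarrow> bounded V \<Longrightarrow> V \<in> sets borel \<Longrightarrow>
    \<exists>K>0. Lim (at_right (0::real)) (\<lambda>\<delta>.
       Limsup at_top (\<lambda>n::real.
         SUP z\<in>{z\<in>E. norm (z - n *\<^sub>R q) < \<delta> * n}.
           ereal (1 / n) * eln (enn2ereal
             (\<integral>\<^sup>+ t. indicator {K * n..} t *
                 ennreal (measure (P z) {\<omega>\<in>space S. Z t \<omega> \<in> (\<lambda>x. n *\<^sub>R x) ` V}) \<partial>lborel))))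
     \<le> - ereal A"
proof -
  obtain c where "0 < c" and c_less: "ereal c < I (0, 0)"
    using ereal_dense2[OF I_00] by (auto simp flip: zero_ereal_def)
  have "lsc (\<lambda>q'. I (0, q'))"
    using I_lsc by (rule lsc_compose_continuous) (intro continuous_intros)
  then obtain r where "0 < r" and I_gt: "\<And>q'. q' \<in> cball 0 r \<Longrightarrow> ereal c < I (0, q')"
    using lsc_greater_on_cball c_less by blast
  have "Lim (at_right 0) (\<lambda>\<delta>. Limsup (at_right 0) (\<lambda>\<epsilon>.
          ereal \<epsilon> * eln (SUP z\<in>{z\<in>E. norm (\<epsilon> *\<^sub>R z - 0) < \<delta>}.
            ereal (measure (P z) {\<omega>\<in>space S. \<epsilon> *\<^sub>R Z (T / \<epsilon>) \<omega> \<in> cball 0 r}))))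
      \<le> - (INF q'\<in>cball 0 r. I (0, q'))"
    by (rule ldp) simp
  also have "\<dots> \<le> - ereal c"
    using I_gt by (subst ereal_minus_le_minus) (intro INF_greatest less_imp_le)
  also have "\<dots> < - ereal (c / 2)" using \<open>0 < c\<close> by simp
  finally obtain \<delta>\<^sub>0 \<epsilon>\<^sub>0 where "0 < \<delta>\<^sub>0" "0 < \<epsilon>\<^sub>0" and decay:
    "\<And>\<epsilon> z. 0 < \<epsilon> \<Longrightarrow> \<epsilon> < \<epsilon>\<^sub>0 \<Longrightarrow> z \<in> E \<Longrightarrow> norm (\<epsilon> *\<^sub>R z) < \<delta>\<^sub>0 \<Longrightarrow>
       measure (P z) {\<omega>\<in>space S. \<epsilon> *\<^sub>R Z (T / \<epsilon>) \<omega> \<in> cball 0 r} \<le> exp (- (c / 2) / \<epsilon>)"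
    by (rule exp_bound_of_Lim_Limsup_less) auto
  show "?thesis A q V" if "bounded V" for A q V
    using occupation_Lim_Limsup_le[OF proc T_pos _ \<open>0 < r\<close> \<open>0 < \<delta>\<^sub>0\<close> \<open>0 < \<epsilon>\<^sub>0\<close> decay that] \<open>0 < c\<close>
    by simp
qed

end
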